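(* Let $A$ be a unital separable simple $C^*$-algebra\ with real rank zero and stable rank one, and let $\alpha\in\mathrm{Aut}(A)$. Suppose there is a subgroup $G\subset K_0(A)$ such that $\rho_A(G)$ is dense in $\rho_A(K_0(A))$ and $\alpha_{*0}|_G=\mathrm{id}_G$. Then $\tau(\alpha(a))=\tau(a)$ for all $a\in A$ and all tracial states $\tau$ of $A$.
   Context: $T(A)$ is the tracial state space of $A$, $\mathrm{Aff}(T(A))$ the real continuous affine functions on $T(A)$, and $\rho_A:K_0(A)\to\mathrm{Aff}(T(A))$ is given by $\rho_A([p])(\tau)=\tau(p)$. $\alpha_{*0}$ is the homomorphism induced by $\alpha$ on $K_0(A)$. *)

theory Defs
  imports "HOL-Analysis.Analysis"
begin

class unital_cstar_algebra = real_normed_algebra_1 + banach +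
  fixes cs_scale :: "complex \<Rightarrow> 'a \<Rightarrow> 'a"
    and cs_star :: "'a \<Rightarrow> 'a"
  assumes cs_scale_of_real: "cs_scale (complex_of_real r) a = scaleR r a"
    and cs_scale_add_right: "cs_scale c (a + b) = cs_scale c a + cs_scale c b"
    and cs_scale_add_left: "cs_scale (c + d) a = cs_scale c a + cs_scale d a"
    and cs_scale_scale: "cs_scale c (cs_scale d a) = cs_scale (c * d) a"
    and norm_cs_scale: "norm (cs_scale c a) = cmod c * norm a"
    and mult_cs_scale_left: "cs_scale c a * b = cs_scale c (a * b)"
    and mult_cs_scale_right: "a * cs_scale c b = cs_scale c (a * b)"
    and cs_star_star: "cs_star (cs_star a) = a"
    and cs_star_add: "cs_star (a + b) = cs_star a + cs_star b"
    and cs_star_mult: "cs_star (a * b) = cs_star b * cs_star a"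
    and cs_star_scale: "cs_star (cs_scale c a) = cs_scale (cnj c) (cs_star a)"
    and cstar_identity: "norm (cs_star a * a) = (norm a)\<^sup>2"

definition cs_invertible :: "'a::unital_cstar_algebra \<Rightarrow> bool" where
  "cs_invertible a \<longleftrightarrow> (\<exists>b. a * b = 1 \<and> b * a = 1)"

definition separable_cstar :: "'a::unital_cstar_algebra itself \<Rightarrow> bool" where
  "separable_cstar _ \<longleftrightarrow> (\<exists>D::'a set. countable D \<and> closure D = UNIV)"

definition closed_two_sided_ideal :: "'a::unital_cstar_algebra set \<Rightarrow> bool" where
  "closed_two_sided_ideal I \<longleftrightarrow> closed I \<and> 0 \<in> I
     \<and> (\<forall>a\<in>I. \<forall>b\<in>I. a + b \<in> I)
     \<and> (\<forall>a\<in>I. \<forall>c. cs_scale c a \<in> I)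
     \<and> (\<forall>a\<in>I. \<forall>x. x * a \<in> I \<and> a * x \<in> I)"

definition simple_cstar :: "'a::unital_cstar_algebra itself \<Rightarrow> bool" where
  "simple_cstar _ \<longleftrightarrow> (\<forall>I::'a set. closed_two_sided_ideal I \<longrightarrow> I = {0} \<or> I = UNIV)"

definition real_rank_zero :: "'a::unital_cstar_algebra itself \<Rightarrow> bool" where
  "real_rank_zero _ \<longleftrightarrow>
     {a::'a. cs_star a = a} \<subseteq> closure {a. cs_star a = a \<and> cs_invertible a}"

definition stable_rank_one :: "'a::unital_cstar_algebra itself \<Rightarrow> bool" where
  "stable_rank_one _ \<longleftrightarrow> closure {a::'a. cs_invertible a} = UNIV"

definition star_automorphism :: "('a::unital_cstar_algebra \<Rightarrow> 'a) \<Rightarrow> bool" where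
  "star_automorphism \<alpha> \<longleftrightarrow> bij \<alpha>
     \<and> (\<forall>a b. \<alpha> (a + b) = \<alpha> a + \<alpha> b)
     \<and> (\<forall>a b. \<alpha> (a * b) = \<alpha> a * \<alpha> b)
     \<and> (\<forall>c a. \<alpha> (cs_scale c a) = cs_scale c (\<alpha> a))
     \<and> (\<forall>a. \<alpha> (cs_star a) = cs_star (\<alpha> a))"

definition tracial_state :: "('a::unital_cstar_algebra \<Rightarrow> complex) \<Rightarrow> bool" where
  "tracial_state \<tau> \<longleftrightarrow>
     (\<forall>a b. \<tau> (a + b) = \<tau> a + \<tau> b)
     \<and> (\<forall>c a. \<tau> (cs_scale c a) = c * \<tau> a)
     \<and> (\<forall>a. Im (\<tau> (cs_star a * a)) = 0 \<and> Re (\<tau> (cs_star a * a)) \<ge> 0)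
     \<and> \<tau> 1 = 1
     \<and> (\<forall>a b. \<tau> (a * b) = \<tau> (b * a))"

text \<open>A matrix is a function \<open>nat \<Rightarrow> nat \<Rightarrow> 'a\<close>; an element of \<open>M_n(A)\<close> is a pair (n, p)
with p supported on \<open>{0..<n} \<times> {0..<n}\<close>.\<close>

type_synonym 'a pmat = "nat \<times> (nat \<Rightarrow> nat \<Rightarrow> 'a)"

definition mat_supp :: "nat \<Rightarrow> nat \<Rightarrow> (nat \<Rightarrow> nat \<Rightarrow> 'a::zero) \<Rightarrow> bool" where
  "mat_supp m n M \<longleftrightarrow> (\<forall>i j. (m \<le> i \<or> n \<le> j) \<longrightarrow> M i j = 0)"

definition mat_mul :: "nat \<Rightarrow> (nat \<Rightarrow> nat \<Rightarrow> 'a::{times,comm_monoid_add})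
    \<Rightarrow> (nat \<Rightarrow> nat \<Rightarrow> 'a) \<Rightarrow> (nat \<Rightarrow> nat \<Rightarrow> 'a)" where
  "mat_mul k M N = (\<lambda>i j. \<Sum>l<k. M i l * N l j)"

definition mat_adj :: "(nat \<Rightarrow> nat \<Rightarrow> 'a::unital_cstar_algebra) \<Rightarrow> (nat \<Rightarrow> nat \<Rightarrow> 'a)" where
  "mat_adj M = (\<lambda>i j. cs_star (M j i))"

definition is_proj :: "'a::unital_cstar_algebra pmat \<Rightarrow> bool" where
  "is_proj x \<longleftrightarrow> (case x of (n, p) \<Rightarrow> mat_supp n n p \<and> mat_adj p = p \<and> mat_mul n p p = p)"

definition mvn_equiv :: "'a::unital_cstar_algebra pmat \<Rightarrow> 'a pmat \<Rightarrow> bool" where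
  "mvn_equiv x y \<longleftrightarrow> (case x of (n, p) \<Rightarrow> case y of (m, q) \<Rightarrow>
     (\<exists>v. mat_supp m n v \<and> mat_mul m (mat_adj v) v = p \<and> mat_mul n v (mat_adj v) = q))"

definition dsum :: "'a::zero pmat \<Rightarrow> 'a pmat \<Rightarrow> 'a pmat" where
  "dsum x y = (case x of (n, p) \<Rightarrow> case y of (m, q) \<Rightarrow>
     (n + m, \<lambda>i j. if i < n \<and> j < n then p i j
                   else if n \<le> i \<and> n \<le> j then q (i - n) (j - n) else 0))"

definition unit_proj :: "nat \<Rightarrow> 'a::{zero,one} pmat" where
  "unit_proj k = (k, \<lambda>i j. if i = j \<and> i < k then 1 else 0)"

section \<open>\<open>K_0(A)\<close> as the Grothendieck group (formal differences [x] - [y])\<close>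

definition k0_rel :: "(('a::unital_cstar_algebra pmat \<times> 'a pmat) \<times> ('a pmat \<times> 'a pmat)) set" where
  "k0_rel = {((x, y), (x', y')). is_proj x \<and> is_proj y \<and> is_proj x' \<and> is_proj y' \<and>
     (\<exists>k. mvn_equiv (dsum (dsum x y') (unit_proj k)) (dsum (dsum x' y) (unit_proj k)))}"

definition K0 :: "'a::unital_cstar_algebra itself \<Rightarrow> ('a pmat \<times> 'a pmat) set set" where
  "K0 _ = {(x, y). is_proj x \<and> is_proj y} // k0_rel"

definition k0_class :: "'a::unital_cstar_algebra pmat \<times> 'a pmat \<Rightarrow> ('a pmat \<times> 'a pmat) set" where
  "k0_class u = k0_rel `` {u}"

definition k0_zero :: "'a::unital_cstar_algebra itself \<Rightarrow> ('a pmat \<times> 'a pmat) set" where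
  "k0_zero _ = k0_class ((0, \<lambda>i j. 0), (0, \<lambda>i j. 0))"

definition k0_add :: "('a::unital_cstar_algebra pmat \<times> 'a pmat) set
    \<Rightarrow> ('a pmat \<times> 'a pmat) set \<Rightarrow> ('a pmat \<times> 'a pmat) set" where
  "k0_add X Y = \<Union>{k0_class (dsum x x', dsum y y') | x y x' y'. (x, y) \<in> X \<and> (x', y') \<in> Y}"

definition k0_neg :: "('a::unital_cstar_algebra pmat \<times> 'a pmat) set \<Rightarrow> ('a pmat \<times> 'a pmat) set" where
  "k0_neg X = {(y, x) | x y. (x, y) \<in> X}"

definition k0_subgroup :: "('a::unital_cstar_algebra pmat \<times> 'a pmat) set set \<Rightarrow> bool" where
  "k0_subgroup G \<longleftrightarrow> G \<subseteq> K0 TYPE('a) \<and> k0_zero TYPE('a) \<in> G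
     \<and> (\<forall>X\<in>G. \<forall>Y\<in>G. k0_add X Y \<in> G) \<and> (\<forall>X\<in>G. k0_neg X \<in> G)"

definition map_pmat :: "('a \<Rightarrow> 'b) \<Rightarrow> 'a pmat \<Rightarrow> 'b pmat" where
  "map_pmat f x = (case x of (n, p) \<Rightarrow> (n, \<lambda>i j. f (p i j)))"

definition k0_map :: "('a::unital_cstar_algebra \<Rightarrow> 'a) \<Rightarrow> ('a pmat \<times> 'a pmat) set \<Rightarrow> ('a pmat \<times> 'a pmat) set" where
  "k0_map \<alpha> X = \<Union>{k0_class (map_pmat \<alpha> x, map_pmat \<alpha> y) | x y. (x, y) \<in> X}"

definition proj_trace :: "('a::unital_cstar_algebra \<Rightarrow> complex) \<Rightarrow> 'a pmat \<Rightarrow> real" where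
  "proj_trace \<tau> x = (case x of (n, p) \<Rightarrow> Re (\<Sum>i<n. \<tau> (p i i)))"

definition rho :: "('a::unital_cstar_algebra pmat \<times> 'a pmat) set \<Rightarrow> ('a \<Rightarrow> complex) \<Rightarrow> real" where
  "rho X \<tau> = (SOME r. \<exists>x y. (x, y) \<in> X \<and> r = proj_trace \<tau> x - proj_trace \<tau> y)"

end

theory Submission
  imports Defs "HOL-Computational_Algebra.Formal_Power_Series" "HOL-Analysis.Generalised_Binomial_Theorem"
begin

text \<open>The composite \<open>\<sigma> = \<tau> \<circ> \<alpha>\<close> is again a tracial state. Since \<open>\<alpha>\<^sub>*\<^sub>0\<close> fixes \<open>G\<close> and
  \<open>\<rho>(G)\<close> is dense, \<open>\<sigma>\<close> and \<open>\<tau>\<close> induce the same functional on \<open>K\<^sub>0(A)\<close>, so they agree on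
  projections. In real rank zero this forces \<open>\<sigma> = \<tau>\<close>: a self-adjoint \<open>h\<close> with \<open>\<parallel>h\<parallel> \<le> 1\<close> is
  close to an invertible self-adjoint \<open>k\<close>, and for the symmetry \<open>s = k |k|\<^sup>-\<^sup>1\<close>, an affine
  combination of \<open>1\<close> and a projection, \<open>\<parallel>k - s/2\<parallel> \<le> 3/4\<close>. Hence \<open>Re \<sigma> - Re \<tau>\<close> on the unit
  ball of self-adjoint elements is bounded by \<open>3/4\<close> of its own bound, i.e. it vanishes.
  No spectral theory is needed: \<open>|k|\<close> is a binomial series, and norm bounds come from the
  C*-identity.\<close>

lemma cs_scale_zero_right [simp]: "cs_scale c 0 = 0"
  using cs_scale_add_right[of c 0 0] by simp

lemma cs_scale_zero_left [simp]: "cs_scale 0 a = 0"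
  using cs_scale_of_real[of 0 a] by simp

lemma cs_scale_one [simp]: "cs_scale 1 a = a"
  using cs_scale_of_real[of 1 a] by simp

lemma cs_scale_minus_left: "cs_scale (- c) a = - cs_scale c a"
  using cs_scale_add_left[of c "- c" a] by (simp add: minus_unique)

lemma cs_scale_minus_right: "cs_scale c (- a) = - cs_scale c a"
  using cs_scale_add_right[of c a "- a"] by (simp add: minus_unique)

lemma cs_star_zero [simp]: "cs_star 0 = 0"
  using cs_star_add[of 0 0] by simp

lemma cs_star_minus: "cs_star (- a) = - cs_star a"
  using cs_star_add[of a "- a"] by (simp add: minus_unique)

lemma cs_star_diff: "cs_star (a - b) = cs_star a - cs_star b"
  by (simp only: diff_conv_add_uminus cs_star_add cs_star_minus)

lemma cs_star_scaleR: "cs_star (r *\<^sub>R a) = r *\<^sub>R cs_star a"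
  using cs_star_scale[of "complex_of_real r" a] by (simp add: cs_scale_of_real)

lemma cs_star_one [simp]: "cs_star 1 = 1"
  using cs_star_mult[of "cs_star 1" 1] by (simp add: cs_star_star)

lemma cs_star_power: "cs_star (x ^ n) = cs_star x ^ n"
  by (induction n) (simp_all add: cs_star_mult power_commutes)

lemma norm_cs_star [simp]: "norm (cs_star a) = norm a"
proof -
  have le: "norm b \<le> norm (cs_star b)" for b :: 'a
  proof -
    have "norm b * norm b \<le> norm (cs_star b) * norm b"
      using cstar_identity[of b] norm_mult_ineq[of "cs_star b" b] by (simp add: power2_eq_square)
    then show ?thesis
      by (cases "b = 0") simp_all
  qed
  show ?thesis
    using le[of a] le[of "cs_star a"] by (simp add: cs_star_star)
qed

lemma bounded_linear_cs_star: "bounded_linear cs_star"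
  by (rule bounded_linear_intro[where K=1]) (auto simp: cs_star_add cs_star_scaleR)

definition selfadjoint :: "'a::unital_cstar_algebra \<Rightarrow> bool" where
  "selfadjoint x \<longleftrightarrow> cs_star x = x"

lemma selfadjoint_one [simp]: "selfadjoint 1"
  by (simp add: selfadjoint_def)

lemma selfadjoint_diff: "selfadjoint x \<Longrightarrow> selfadjoint y \<Longrightarrow> selfadjoint (x - y)"
  by (simp add: selfadjoint_def cs_star_diff)

lemma selfadjoint_minus: "selfadjoint x \<Longrightarrow> selfadjoint (- x)"
  by (simp add: selfadjoint_def cs_star_minus)

lemma selfadjoint_scaleR: "selfadjoint x \<Longrightarrow> selfadjoint (r *\<^sub>R x)"
  by (simp add: selfadjoint_def cs_star_scaleR)

lemma selfadjoint_of_real [simp]: "selfadjoint (of_real r)"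
  unfolding of_real_def by (simp add: selfadjoint_scaleR)

lemma selfadjoint_mult_commute:
  "selfadjoint x \<Longrightarrow> selfadjoint y \<Longrightarrow> x * y = y * x \<Longrightarrow> selfadjoint (x * y)"
  by (simp add: selfadjoint_def cs_star_mult)

lemma norm_square_selfadjoint: "selfadjoint x \<Longrightarrow> norm (x * x) = (norm x)\<^sup>2"
  using cstar_identity[of x] by (simp add: selfadjoint_def)

lemma selfadjoint_inverse:
  assumes "selfadjoint k" and "k * j = 1" and "j * k = 1"
  shows "selfadjoint j"
proof -
  have "cs_star j * k = 1"
    using arg_cong[OF assms(2), of cs_star] assms(1) by (simp add: cs_star_mult selfadjoint_def)
  have "cs_star j = cs_star j * (k * j)"
    using assms(2) by simp
  also have "\<dots> = j"
    using \<open>cs_star j * k = 1\<close> by (simp flip: mult.assoc)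
  finally show ?thesis
    by (simp add: selfadjoint_def)
qed

lemma selfadjoint_decomposition:
  obtains h1 h2 where "selfadjoint h1" "selfadjoint h2" "a = h1 + cs_scale \<i> h2"
proof
  show "selfadjoint ((1/2) *\<^sub>R (a + cs_star a))"
    by (simp add: selfadjoint_def cs_star_scaleR cs_star_add cs_star_star add.commute)
  show "selfadjoint (cs_scale (- \<i>/2) (a - cs_star a))"
    by (simp add: selfadjoint_def cs_star_scale cs_star_diff cs_star_star cs_star_minus
        cs_scale_minus_left flip: cs_scale_minus_right minus_divide_left)
  have "cs_scale \<i> (cs_scale (- \<i>/2) (a - cs_star a)) = (1/2) *\<^sub>R (a - cs_star a)"
    using cs_scale_of_real[of "1/2"] by (simp add: cs_scale_scale)
  then show "a = (1/2) *\<^sub>R (a + cs_star a) + cs_scale \<i> (cs_scale (- \<i>/2) (a - cs_star a))"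
    by (simp add: algebra_simps flip: scaleR_add_left)
qed

section \<open>Binomial series and square roots\<close>

definition binomial_series :: "real \<Rightarrow> 'a::{real_normed_algebra_1,banach} \<Rightarrow> 'a" where
  "binomial_series a w = (\<Sum>n. (a gchoose n) *\<^sub>R (- w) ^ n)"

lemma summable_norm_binomial_series:
  fixes w :: "'a::{real_normed_algebra_1,banach}"
  assumes "norm w < 1"
  shows "summable (\<lambda>n. norm ((a gchoose n) *\<^sub>R (- w) ^ n))"
proof -
  have "ereal (norm (norm w)) < conv_radius (\<lambda>n. a gchoose n)"
    using assms by (simp add: conv_radius_gchoose)
  then have "summable (\<lambda>n. norm ((a gchoose n) * norm w ^ n))"
    by (rule abs_summable_in_conv_radius)
  then show ?thesis
    by (rule summable_comparison_test')
      (use norm_power_ineq[of "- w"] in \<open>auto simp: abs_mult power_abs intro!: mult_left_mono\<close>)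
qed

lemma summable_binomial_series:
  fixes w :: "'a::{real_normed_algebra_1,banach}"
  shows "norm w < 1 \<Longrightarrow> summable (\<lambda>n. (a gchoose n) *\<^sub>R (- w) ^ n)"
  by (rule summable_norm_cancel[OF summable_norm_binomial_series])

lemma binomial_series_add:
  fixes w :: "'a::{real_normed_algebra_1,banach}"
  assumes "norm w < 1"
  shows "binomial_series a w * binomial_series b w = binomial_series (a + b) w"
proof -
  have "binomial_series a w * binomial_series b w
      = (\<Sum>k. \<Sum>i\<le>k. ((a gchoose i) *\<^sub>R (- w) ^ i) * ((b gchoose (k - i)) *\<^sub>R (- w) ^ (k - i)))"
    unfolding binomial_series_def
    by (rule Cauchy_product[OF summable_norm_binomial_series[OF assms] summable_norm_binomial_series[OF assms]])
  also have "\<dots> = (\<Sum>k. (\<Sum>i\<le>k. (a gchoose i) * (b gchoose (k - i))) *\<^sub>R (- w) ^ k)"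
    by (simp add: scaleR_sum_left mult.commute flip: power_add)
  also have "\<dots> = binomial_series (a + b) w"
    using gbinomial_Vandermonde[of a b] by (simp add: binomial_series_def atMost_atLeast0)
  finally show ?thesis .
qed

lemma binomial_series_1: "binomial_series 1 w = 1 - w"
proof -
  have "((1::real) gchoose n) = 0" if "n \<notin> {0, 1}" for n
    using that binomial_gbinomial[of 1 n, where 'a=real] by (simp add: binomial_eq_0)
  then have "binomial_series 1 w = (\<Sum>n\<in>{0,1}. ((1::real) gchoose n) *\<^sub>R (- w) ^ n)"
    unfolding binomial_series_def by (intro suminf_finite) auto
  then show ?thesis by simp
qed

lemma binomial_series_commute:
  fixes w x :: "'a::{real_normed_algebra_1,banach}"
  assumes "norm w < 1" and "x * w = w * x"
  shows "x * binomial_series a w = binomial_series a w * x"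
proof -
  have "x * (- w) ^ n = (- w) ^ n * x" for n
    using assms(2) by (simp add: power_commuting_commutes)
  then have "(\<Sum>n. x * ((a gchoose n) *\<^sub>R (- w) ^ n)) = (\<Sum>n. ((a gchoose n) *\<^sub>R (- w) ^ n) * x)"
    by simp
  then show ?thesis
    unfolding binomial_series_def
    by (simp only: suminf_mult[OF summable_binomial_series[OF assms(1)]]
        suminf_mult2[OF summable_binomial_series[OF assms(1)]])
qed

lemma selfadjoint_binomial_series:
  fixes w :: "'a::unital_cstar_algebra"
  assumes "norm w < 1" and "selfadjoint w"
  shows "selfadjoint (binomial_series a w)"
proof -
  have "cs_star (binomial_series a w) = (\<Sum>n. cs_star ((a gchoose n) *\<^sub>R (- w) ^ n))"
    unfolding binomial_series_def
    by (rule bounded_linear.suminf[OF bounded_linear_cs_star summable_binomial_series[OF assms(1)]])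
  then show ?thesis
    using assms(2)
    by (simp add: selfadjoint_def binomial_series_def cs_star_scaleR cs_star_power cs_star_minus)
qed

lemma exists_selfadjoint_sqrt:
  fixes y :: "'a::unital_cstar_algebra"
  assumes "selfadjoint y" and "norm y < b"
  obtains u where "selfadjoint u" "u * u = of_real b - y"
    and "\<And>x. x * y = y * x \<Longrightarrow> x * u = u * x"
proof
  have b: "b > 0"
    using assms(2) norm_ge_zero[of y] by linarith
  define w where "w = (1 / b) *\<^sub>R y"
  have w: "norm w < 1" "selfadjoint w"
    using assms b by (simp_all add: w_def selfadjoint_scaleR)
  define u where "u = sqrt b *\<^sub>R binomial_series (1/2) w"
  show "selfadjoint u"
    unfolding u_def by (intro selfadjoint_scaleR selfadjoint_binomial_series w)
  have "u * u = b *\<^sub>R binomial_series 1 w"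
    using b by (simp add: u_def binomial_series_add[OF w(1)])
  then show "u * u = of_real b - y"
    using b by (simp add: binomial_series_1 w_def of_real_def scaleR_diff_right)
  show "x * u = u * x" if "x * y = y * x" for x
    using binomial_series_commute[OF w(1), of x] that by (simp add: u_def w_def)
qed

section \<open>Absolute values and symmetries\<close>

text \<open>With \<open>w = u + i v\<close>, commutativity gives \<open>w\<^sup>* w = u\<^sup>2 + v\<^sup>2 = 2\<theta>\<close> and
  \<open>w\<^sup>2 + (w\<^sup>*)\<^sup>2 = 2 (u\<^sup>2 - v\<^sup>2) = 4 x\<close>; the C*-identity then bounds \<open>4 \<parallel>x\<parallel>\<close> by \<open>2 \<parallel>w\<parallel>\<^sup>2 = 4 \<theta>\<close>.\<close>

lemma norm_le_of_commuting_squares: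
  fixes x u v :: "'a::unital_cstar_algebra"
  assumes "selfadjoint u" "selfadjoint v" "u * v = v * u" "\<theta> \<ge> 0"
    and plus: "of_real \<theta> + x = u * u" and minus: "of_real \<theta> - x = v * v"
  shows "norm x \<le> \<theta>"
proof -
  define w where "w = u + cs_scale \<i> v"
  have star_w: "cs_star w = u + cs_scale (- \<i>) v"
    using assms(1,2) by (simp add: w_def selfadjoint_def cs_star_add cs_star_scale)
  have prod: "(u + cs_scale c v) * (u + cs_scale d v) = u * u + cs_scale (c + d) (u * v) + cs_scale (c * d) (v * v)"
    for c d
    using assms(3)
    by (simp add: algebra_simps mult_cs_scale_left mult_cs_scale_right cs_scale_scale cs_scale_add_left
        cs_scale_add_right)
  have "cs_star w * w = u * u + v * v"
    unfolding star_w by (simp add: w_def prod)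
  also have "\<dots> = 2 *\<^sub>R of_real \<theta>"
    unfolding plus [symmetric] minus [symmetric] by (simp add: scaleR_2)
  finally have "(norm w)\<^sup>2 = 2 * \<theta>"
    using \<open>\<theta> \<ge> 0\<close> cstar_identity[of w] by simp
  have "w * w + cs_star w * cs_star w = 2 *\<^sub>R (u * u - v * v)"
    unfolding star_w unfolding w_def prod by (simp add: cs_scale_minus_left scaleR_2)
  also have "\<dots> = 4 *\<^sub>R x"
    unfolding plus [symmetric] minus [symmetric] by (simp add: algebra_simps flip: scaleR_2 scaleR_add_left)
  finally have "4 * norm x \<le> norm (w * w) + norm (cs_star w * cs_star w)"
    using norm_triangle_ineq[of "w * w" "cs_star w * cs_star w"] by simp
  also have "\<dots> \<le> 2 * (norm w)\<^sup>2"
    using norm_mult_ineq[of w w] norm_mult_ineq[of "cs_star w" "cs_star w"]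
    by (simp add: power2_eq_square)
  finally show ?thesis
    using \<open>(norm w)\<^sup>2 = 2 * \<theta>\<close> by simp
qed

lemma norm_square_sub_half_le:
  fixes q :: "'a::unital_cstar_algebra"
  assumes "selfadjoint q" and "norm (q * q) < 1"
  shows "norm (q * q - of_real (1/2)) \<le> 1/2"
proof -
  have "selfadjoint (q * q)"
    using assms(1) by (simp add: selfadjoint_mult_commute)
  then obtain w where w: "selfadjoint w" "w * w = of_real 1 - q * q"
    and comm: "\<And>x. x * (q * q) = (q * q) * x \<Longrightarrow> x * w = w * x"
    using exists_selfadjoint_sqrt assms(2) by blast
  have "q * w = w * q"
    using comm[of q] by (simp add: mult.assoc)
  then show ?thesis
  proof (rule norm_le_of_commuting_squares[OF assms(1) w(1)])
    show "of_real (1/2) - (q * q - of_real (1/2)) = w * w"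
      using w(2) by (simp flip: of_real_add)
  qed (simp_all add: selfadjoint_diff)
qed

lemma invertible_square_bounded_below:
  fixes k j :: "'a::unital_cstar_algebra"
  assumes k: "selfadjoint k" and kj: "k * j = 1" and jk: "j * k = 1"
  obtains m v where "0 < m" "m \<le> 1" "selfadjoint v" "v * v = k * k - of_real m"
    "v * (k * k) = (k * k) * v"
proof -
  define m where "m = 1 / (1 + (norm j)\<^sup>2)"
  have pos: "0 < 1 + (norm j)\<^sup>2"
    by (simp add: add_pos_nonneg)
  have m: "0 < m" "m \<le> 1"
    using pos by (simp_all add: m_def)
  have "norm (m *\<^sub>R (j * j)) \<le> m * (norm j)\<^sup>2"
    using m norm_mult_ineq[of j j] by (simp add: power2_eq_square mult_left_mono)
  also have "\<dots> < 1"
    using pos by (simp add: m_def)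
  finally have "norm (m *\<^sub>R (j * j)) < 1" .
  moreover have "selfadjoint (m *\<^sub>R (j * j))"
    using selfadjoint_inverse[OF k kj jk] by (simp add: selfadjoint_scaleR selfadjoint_mult_commute)
  ultimately obtain R where R: "selfadjoint R" "R * R = of_real 1 - m *\<^sub>R (j * j)"
    and comm: "\<And>x. x * (m *\<^sub>R (j * j)) = (m *\<^sub>R (j * j)) * x \<Longrightarrow> x * R = R * x"
    using exists_selfadjoint_sqrt by blast
  have kjj: "k * (j * j) = (j * j) * k"
    using kj jk by (simp add: mult.assoc) (simp flip: mult.assoc)
  have kkjj: "k * k * (j * j) = 1" "j * j * (k * k) = 1"
    using kj jk by (metis mult.assoc mult_1_left)+
  have kR: "k * R = R * k" and kkR: "(k * k) * R = R * (k * k)"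
    using comm[of k] comm[of "k * k"] kjj kkjj by simp_all
  have "(k * R) * (k * R) = (k * k) * (R * R)"
    by (metis kR mult.assoc)
  also have "\<dots> = k * k - of_real m"
    using kkjj by (simp add: R(2) algebra_simps of_real_def)
  finally show ?thesis
    using m selfadjoint_mult_commute[OF k R(1) kR] kkR
    by (intro that[of m "k * R"]) (simp_all add: mult.assoc)
qed

lemma norm_one_minus_scaled_square_lt1:
  fixes k j :: "'a::unital_cstar_algebra"
  assumes k: "selfadjoint k" and kj: "k * j = 1" and jk: "j * k = 1"
    and c: "norm (k * k) < c" "1 \<le> c"
  shows "norm (1 - (1 / c) *\<^sub>R (k * k)) < 1"
proof -
  obtain m v where m: "0 < m" "m \<le> 1" and v: "selfadjoint v" "v * v = k * k - of_real m"
    and vkk: "v * (k * k) = (k * k) * v"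
    using invertible_square_bounded_below[OF k kj jk] .
  have kk: "selfadjoint (k * k)"
    using k by (simp add: selfadjoint_mult_commute)
  moreover have "norm (k * k) < 2 * c - m"
    using c m by linarith
  ultimately obtain u where u: "selfadjoint u" "u * u = of_real (2 * c - m) - k * k"
    and comm: "\<And>x. x * (k * k) = (k * k) * x \<Longrightarrow> x * u = u * x"
    using exists_selfadjoint_sqrt by blast
  txt \<open>\<open>m \<le> k\<^sup>2 < c\<close> in the sense of commuting squares, so \<open>1 - k\<^sup>2/c\<close> lies between
    \<open>-\<theta>\<close> and \<open>\<theta>\<close>.\<close>
  define \<theta> where "\<theta> = 1 - m / c"
  have "norm (1 - (1 / c) *\<^sub>R (k * k)) \<le> \<theta>"
  proof (rule norm_le_of_commuting_squares)
    show "selfadjoint ((1 / sqrt c) *\<^sub>R u)" "selfadjoint ((1 / sqrt c) *\<^sub>R v)"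
      using u(1) v(1) by (simp_all add: selfadjoint_scaleR)
    show "(1 / sqrt c) *\<^sub>R u * (1 / sqrt c) *\<^sub>R v = (1 / sqrt c) *\<^sub>R v * (1 / sqrt c) *\<^sub>R u"
      using comm[OF vkk] by simp
    show "0 \<le> \<theta>"
      using c m by (simp add: \<theta>_def)
    show "of_real \<theta> + (1 - (1 / c) *\<^sub>R (k * k)) = (1 / sqrt c) *\<^sub>R u * (1 / sqrt c) *\<^sub>R u"
      using c by (simp add: u(2) \<theta>_def of_real_def algebra_simps diff_divide_distrib scaleR_2)
    show "of_real \<theta> - (1 - (1 / c) *\<^sub>R (k * k)) = (1 / sqrt c) *\<^sub>R v * (1 / sqrt c) *\<^sub>R v"
      using c by (simp add: v(2) \<theta>_def of_real_def algebra_simps)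
  qed
  also have "\<theta> < 1"
    using c m by (simp add: \<theta>_def)
  finally show ?thesis .
qed

lemma invertible_abs_bounds:
  fixes k j :: "'a::unital_cstar_algebra"
  assumes k: "selfadjoint k" and kj: "k * j = 1" and jk: "j * k = 1"
    and c: "norm (k * k) < c\<^sup>2" "1 \<le> c"
  obtains r where "selfadjoint r" "r * r = k * k" "r * j = j * r" "norm (r - of_real (c / 2)) \<le> c / 2"
proof -
  txt \<open>\<open>r = |k| = c (1 - z)\<^sup>1\<^sup>/\<^sup>2\<close>; writing it as the square \<open>c q\<^sup>2\<close> with \<open>q = (1 - z)\<^sup>1\<^sup>/\<^sup>4\<close>
    makes it nonnegative, which gives the bound \<open>\<parallel>r - c/2\<parallel> \<le> c/2\<close>.\<close>
  define z where "z = 1 - (1 / c\<^sup>2) *\<^sub>R (k * k)"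
  have z: "norm z < 1" "selfadjoint z"
    using norm_one_minus_scaled_square_lt1[OF k kj jk c(1)] c(2) k
    by (simp_all add: z_def selfadjoint_diff selfadjoint_scaleR selfadjoint_mult_commute)
  define q where "q = binomial_series (1/4) z"
  have q: "selfadjoint q"
    unfolding q_def using z by (rule selfadjoint_binomial_series)
  have qq: "q * q = binomial_series (1/2) z"
    using binomial_series_add[OF z(1), of "1/4" "1/4"] by (simp add: q_def)
  have qqqq: "(q * q) * (q * q) = (1 / c\<^sup>2) *\<^sub>R (k * k)"
    using binomial_series_add[OF z(1), of "1/2" "1/2"] by (simp add: qq binomial_series_1 z_def)
  have "(norm (q * q))\<^sup>2 < 1"
    using c q qqqq by (simp add: norm_square_selfadjoint [symmetric] selfadjoint_mult_commute
        divide_less_eq)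
  then have "norm (q * q) < 1"
    by (simp add: power2_less_1_iff)
  then have half: "norm (q * q - of_real (1/2)) \<le> 1/2"
    by (rule norm_square_sub_half_le[OF q])
  have "j * (k * k) = (k * k) * j"
    using kj jk by (simp flip: mult.assoc) (simp add: mult.assoc)
  then have "j * z = z * j"
    by (simp add: z_def algebra_simps)
  then have "j * (q * q) = (q * q) * j"
    unfolding qq by (rule binomial_series_commute[OF z(1)])
  moreover have "c *\<^sub>R (q * q) - of_real (c / 2) = c *\<^sub>R (q * q - of_real (1/2))"
    by (simp add: scaleR_diff_right of_real_def)
  ultimately show ?thesis
    using c q qqqq half
    by (intro that[of "c *\<^sub>R (q * q)"])
      (simp_all add: selfadjoint_scaleR selfadjoint_mult_commute power2_eq_square)
qed

lemma exists_symmetry_near_invertible: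
  fixes k :: "'a::unital_cstar_algebra"
  assumes k: "selfadjoint k" "cs_invertible k" and c: "norm k < c" "1 \<le> c"
  obtains s where "selfadjoint s" "s * s = 1" "norm (k - (1/2) *\<^sub>R s) \<le> c - 1/2"
proof -
  obtain j where kj: "k * j = 1" and jk: "j * k = 1"
    using k(2) unfolding cs_invertible_def by blast
  have "norm (k * k) < c\<^sup>2"
    using norm_mult_ineq[of k k] mult_strict_mono'[OF c(1) c(1)] by (simp add: power2_eq_square)
  then obtain r where r: "selfadjoint r" "r * r = k * k" "r * j = j * r"
    and r_bound: "norm (r - of_real (c / 2)) \<le> c / 2"
    using invertible_abs_bounds[OF k(1) kj jk _ c(2)] by blast
  define s where "s = r * j"
  have s: "selfadjoint s"
    unfolding s_def by (rule selfadjoint_mult_commute[OF r(1) selfadjoint_inverse[OF k(1) kj jk] r(3)])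
  have "s * s = k * (k * j) * j" and "s * r = k * (k * j)"
    unfolding s_def using r(2,3) by (metis mult.assoc)+
  then have ss: "s * s = 1" and sr: "s * r = k"
    using kj by simp_all
  have "(norm s)\<^sup>2 = 1"
    using norm_square_selfadjoint[OF s] ss by simp
  then have "norm s = 1"
    using norm_ge_zero[of s] by (auto simp: power2_eq_1_iff)
  have "r - of_real (1/2) = (r - of_real (c / 2)) + of_real ((c - 1) / 2)"
    by (simp add: of_real_def algebra_simps diff_divide_distrib)
  then have "norm (r - of_real (1/2)) \<le> norm (r - of_real (c / 2)) + norm (of_real ((c - 1) / 2) :: 'a)"
    by (metis norm_triangle_ineq)
  also have "\<dots> \<le> c - 1/2"
    using r_bound c(2) by (simp add: field_simps)
  finally have "norm (r - of_real (1/2)) \<le> c - 1/2" .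
  moreover have "k - (1/2) *\<^sub>R s = s * (r - of_real (1/2))"
    by (simp add: algebra_simps sr of_real_def)
  ultimately have "norm (k - (1/2) *\<^sub>R s) \<le> c - 1/2"
    using norm_mult_ineq[of s "r - of_real (1/2)"] \<open>norm s = 1\<close> by simp
  then show ?thesis
    using s ss that by blast
qed

lemma real_rank_zero_symmetry_approx:
  fixes h :: "'a::unital_cstar_algebra"
  assumes "real_rank_zero TYPE('a)" "selfadjoint h" "norm h \<le> 1" "\<eta> > 0"
  obtains k s where "selfadjoint k" "selfadjoint s" "s * s = 1" "norm (h - k) < \<eta>"
    "norm (k - (1/2) *\<^sub>R s) \<le> 3/4"
proof -
  have "h \<in> closure {a. cs_star a = a \<and> cs_invertible a}"
    using assms(1,2) unfolding real_rank_zero_def selfadjoint_def by blast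
  moreover have "min \<eta> (1/4) > 0"
    using \<open>\<eta> > 0\<close> by simp
  ultimately obtain k where "cs_star k = k" "cs_invertible k" and hk: "dist k h < min \<eta> (1/4)"
    unfolding closure_approachable by blast
  then have k: "selfadjoint k" "cs_invertible k"
    by (simp_all add: selfadjoint_def)
  have "norm k < 5/4"
    using hk assms(3) norm_triangle_ineq2[of k h] by (simp add: dist_norm)
  then obtain s where "selfadjoint s" "s * s = 1" "norm (k - (1/2) *\<^sub>R s) \<le> 3/4"
    using exists_symmetry_near_invertible[OF k, of "5/4"] by auto
  moreover have "norm (h - k) < \<eta>"
    using hk by (simp add: dist_norm norm_minus_commute)
  ultimately show ?thesis
    using k that by blast
qed

section \<open>Tracial states\<close>

lemma tracial_state_add: "tracial_state \<tau> \<Longrightarrow> \<tau> (a + b) = \<tau> a + \<tau> b"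
  unfolding tracial_state_def by blast

lemma tracial_state_zero: "tracial_state \<tau> \<Longrightarrow> \<tau> 0 = 0"
  using tracial_state_add[of \<tau> 0 0] by simp

lemma tracial_state_diff: "tracial_state \<tau> \<Longrightarrow> \<tau> (a - b) = \<tau> a - \<tau> b"
  using tracial_state_add[of \<tau> "a - b" b] by simp

lemma tracial_state_scale: "tracial_state \<tau> \<Longrightarrow> \<tau> (cs_scale c a) = c * \<tau> a"
  unfolding tracial_state_def by blast

lemma tracial_state_scaleR: "tracial_state \<tau> \<Longrightarrow> \<tau> (r *\<^sub>R a) = complex_of_real r * \<tau> a"
  using tracial_state_scale[of \<tau> "complex_of_real r" a] by (simp add: cs_scale_of_real)

lemma tracial_state_one: "tracial_state \<tau> \<Longrightarrow> \<tau> 1 = 1"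
  unfolding tracial_state_def by blast

lemma tracial_state_of_real: "tracial_state \<tau> \<Longrightarrow> \<tau> (of_real r) = complex_of_real r"
  using tracial_state_scaleR[of \<tau> r 1] by (simp add: tracial_state_one flip: of_real_def)

lemma tracial_state_commute: "tracial_state \<tau> \<Longrightarrow> \<tau> (a * b) = \<tau> (b * a)"
  unfolding tracial_state_def by blast

lemma tracial_state_nonneg:
  "tracial_state \<tau> \<Longrightarrow> Im (\<tau> (cs_star a * a)) = 0 \<and> Re (\<tau> (cs_star a * a)) \<ge> 0"
  unfolding tracial_state_def by blast

lemma tracial_state_sum: "tracial_state \<tau> \<Longrightarrow> \<tau> (\<Sum>i\<in>A. f i) = (\<Sum>i\<in>A. \<tau> (f i))"
  by (induction A rule: infinite_finite_induct) (simp_all add: tracial_state_zero tracial_state_add)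

lemma tracial_state_selfadjoint:
  fixes x :: "'a::unital_cstar_algebra"
  assumes \<tau>: "tracial_state \<tau>" and x: "selfadjoint x"
  shows "Im (\<tau> x) = 0" and "\<bar>Re (\<tau> x)\<bar> \<le> norm x"
proof -
  have bound: "Im (\<tau> x) = 0 \<and> \<bar>Re (\<tau> x)\<bar> \<le> t" if "norm x < t" for t
  proof -
    have "Im (\<tau> (of_real t + s *\<^sub>R x)) = 0 \<and> Re (\<tau> (of_real t + s *\<^sub>R x)) \<ge> 0"
      if "s \<in> {-1, 1}" for s
    proof -
      have "norm ((- s) *\<^sub>R x) < t" "selfadjoint ((- s) *\<^sub>R x)"
        using that \<open>norm x < t\<close> x by (auto simp: selfadjoint_minus)
      then obtain u where "selfadjoint u" "u * u = of_real t - (- s) *\<^sub>R x"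
        using exists_selfadjoint_sqrt by blast
      then show ?thesis
        using tracial_state_nonneg[OF \<tau>, of u] by (simp add: selfadjoint_def)
    qed
    then show ?thesis
      using \<tau> by (force simp: tracial_state_add tracial_state_scaleR tracial_state_of_real abs_le_iff)
  qed
  show "Im (\<tau> x) = 0"
    using bound[of "norm x + 1"] by simp
  show "\<bar>Re (\<tau> x)\<bar> \<le> norm x"
  proof (rule field_le_epsilon)
    show "\<bar>Re (\<tau> x)\<bar> \<le> norm x + e" if "e > 0" for e
      using bound[of "norm x + e"] that by simp
  qed
qed

lemma star_automorphism_one:
  assumes "star_automorphism \<alpha>"
  shows "\<alpha> 1 = (1::'a::unital_cstar_algebra)"
proof -
  obtain c where c: "\<alpha> c = 1"
    using assms bij_is_surj unfolding star_automorphism_def by (metis surjD)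
  have "\<alpha> 1 = \<alpha> 1 * \<alpha> c"
    by (simp add: c)
  also have "\<dots> = 1"
    using assms c unfolding star_automorphism_def by (metis mult_1_left)
  finally show ?thesis .
qed

lemma tracial_state_comp_star_automorphism:
  assumes "tracial_state \<tau>" and "star_automorphism \<alpha>"
  shows "tracial_state (\<lambda>a. \<tau> (\<alpha> a))"
proof -
  have "\<alpha> (a + b) = \<alpha> a + \<alpha> b" "\<alpha> (a * b) = \<alpha> a * \<alpha> b" "\<alpha> (cs_scale c a) = cs_scale c (\<alpha> a)"
    "\<alpha> (cs_star a) = cs_star (\<alpha> a)" for a b c
    using assms(2) unfolding star_automorphism_def by blast+
  then show ?thesis
    using tracial_state_add[OF assms(1)] tracial_state_scale[OF assms(1)] tracial_state_one[OF assms(1)]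
      tracial_state_nonneg[OF assms(1)] tracial_state_commute[OF assms(1)] star_automorphism_one[OF assms(2)]
    unfolding tracial_state_def by simp
qed

locale projection_null_functional =
  fixes \<delta> :: "'a::unital_cstar_algebra \<Rightarrow> real" and C :: real
  assumes real_rank_zero: "real_rank_zero TYPE('a)"
    and diff: "\<delta> (a - b) = \<delta> a - \<delta> b"
    and scaleR: "\<delta> (r *\<^sub>R a) = r * \<delta> a"
    and bounded: "selfadjoint x \<Longrightarrow> \<bar>\<delta> x\<bar> \<le> C * norm x"
    and projection: "selfadjoint e \<Longrightarrow> e * e = e \<Longrightarrow> \<delta> e = 0"
begin

lemma bound_nonneg: "C \<ge> 0"
  using bounded[of 1] by simp

lemma symmetry:
  assumes "selfadjoint s" and "s * s = 1"
  shows "\<delta> s = 0"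
proof -
  define p where "p = (1/2) *\<^sub>R (1 + s)"
  have "(1 + s) * (1 + s) = 2 *\<^sub>R (1 + s)"
    using assms(2) by (simp add: algebra_simps scaleR_2)
  then have "\<delta> p = 0"
    using assms(1) by (intro projection) (simp_all add: p_def selfadjoint_def cs_star_add cs_star_scaleR)
  moreover have "s = 2 *\<^sub>R p - 1"
    by (simp add: p_def algebra_simps)
  ultimately show ?thesis
    using projection[of 1] by (simp add: diff scaleR)
qed

lemma bound_power:
  assumes "selfadjoint h" and "norm h \<le> 1"
  shows "\<bar>\<delta> h\<bar> \<le> C * (3/4) ^ n"
  using assms
proof (induction n arbitrary: h)
  case 0
  then show ?case
    using bounded[of h] mult_left_le[OF _ bound_nonneg, of "norm h"] by simp
next
  case (Suc n)
  note C = bound_nonneg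
  show ?case
  proof (rule field_le_epsilon)
    fix \<epsilon> :: real
    assume "\<epsilon> > 0"
    with C have "\<epsilon> / (C + 1) > 0"
      by simp
    then obtain k s where k: "selfadjoint k" and s: "selfadjoint s" "s * s = 1"
      and hk: "norm (h - k) < \<epsilon> / (C + 1)" and ks: "norm (k - (1/2) *\<^sub>R s) \<le> 3/4"
      by (rule real_rank_zero_symmetry_approx[OF real_rank_zero Suc.prems])
    txt \<open>\<open>\<delta>\<close> kills \<open>s\<close>, so up to \<open>\<epsilon>\<close> it sees \<open>h\<close> as the contraction \<open>(3/4) x\<close>.\<close>
    define x where "x = (4/3) *\<^sub>R (k - (1/2) *\<^sub>R s)"
    have "\<bar>\<delta> x\<bar> \<le> C * (3/4) ^ n"
      using ks k s by (intro Suc.IH) (simp_all add: x_def selfadjoint_scaleR selfadjoint_diff)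
    moreover have "\<delta> k = (3/4) * \<delta> x"
      using symmetry[OF s] by (simp add: x_def diff scaleR)
    moreover have "\<bar>\<delta> h - \<delta> k\<bar> \<le> \<epsilon>"
    proof -
      have "\<bar>\<delta> h - \<delta> k\<bar> \<le> C * norm (h - k)"
        using bounded[OF selfadjoint_diff[OF Suc.prems(1) k]] by (simp add: diff)
      also have "\<dots> \<le> C * (\<epsilon> / (C + 1))"
        using hk C by (intro mult_left_mono) simp_all
      also have "\<dots> \<le> \<epsilon>"
        using C \<open>\<epsilon> > 0\<close> by (simp add: field_simps)
      finally show ?thesis .
    qed
    ultimately show "\<bar>\<delta> h\<bar> \<le> C * (3/4) ^ Suc n + \<epsilon>"
      by (simp add: abs_mult)
  qed
qed

lemma selfadjoint_eq_0:
  assumes "selfadjoint h"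
  shows "\<delta> h = 0"
proof -
  define y where "y = (1 / norm h) *\<^sub>R h"
  have y: "selfadjoint y" "norm y \<le> 1"
    using assms by (simp_all add: y_def selfadjoint_scaleR)
  have "(\<lambda>n. C * (3/4::real) ^ n) \<longlonglongrightarrow> 0"
    by (intro tendsto_mult_right_zero LIMSEQ_power_zero) simp_all
  then have "\<bar>\<delta> y\<bar> \<le> 0"
    using bound_power[OF y] by (intro LIMSEQ_le_const) auto
  moreover have "\<delta> h = norm h * \<delta> y"
    using diff[of 0 0] by (cases "h = 0") (simp_all add: y_def scaleR)
  ultimately show ?thesis
    by simp
qed

end

lemma tracial_states_eq_if_eq_on_projections:
  fixes \<sigma> \<tau> :: "'a::unital_cstar_algebra \<Rightarrow> complex"
  assumes "real_rank_zero TYPE('a)" and \<sigma>: "tracial_state \<sigma>" and \<tau>: "tracial_state \<tau>"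
    and projections: "\<And>e. selfadjoint e \<Longrightarrow> e * e = e \<Longrightarrow> Re (\<sigma> e) = Re (\<tau> e)"
  shows "\<sigma> a = \<tau> a"
proof -
  interpret projection_null_functional "\<lambda>x. Re (\<sigma> x) - Re (\<tau> x)" 2
  proof
    show "\<bar>Re (\<sigma> x) - Re (\<tau> x)\<bar> \<le> 2 * norm x" if "selfadjoint x" for x
      using tracial_state_selfadjoint(2)[OF \<sigma> that] tracial_state_selfadjoint(2)[OF \<tau> that] by linarith
  qed (simp_all add: assms tracial_state_diff tracial_state_scaleR algebra_simps)
  have "\<sigma> h = \<tau> h" if "selfadjoint h" for h
    using selfadjoint_eq_0[OF that] tracial_state_selfadjoint(1)[OF \<sigma> that]
      tracial_state_selfadjoint(1)[OF \<tau> that]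
    by (simp add: complex_eq_iff)
  moreover obtain h1 h2 where "selfadjoint h1" "selfadjoint h2" "a = h1 + cs_scale \<i> h2"
    by (rule selfadjoint_decomposition)
  ultimately show ?thesis
    using \<sigma> \<tau> by (simp add: tracial_state_add tracial_state_scale)
qed

section \<open>The pairing of tracial states with \<open>K\<^sub>0\<close>\<close>

lemma sum_lessThan_add:
  fixes f :: "nat \<Rightarrow> 'a::comm_monoid_add"
  shows "(\<Sum>i<n + m. f i) = (\<Sum>i<n. f i) + (\<Sum>i<m. f (i + n))"
  by (induction m) (simp_all add: add_ac)

lemma proj_trace_dsum: "proj_trace \<tau> (dsum x y) = proj_trace \<tau> x + proj_trace \<tau> y"
  by (cases x, cases y) (simp add: dsum_def proj_trace_def sum_lessThan_add)

lemma proj_trace_unit_proj: "tracial_state \<tau> \<Longrightarrow> proj_trace \<tau> (unit_proj k) = real k"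
  by (simp add: unit_proj_def proj_trace_def tracial_state_one)

lemma proj_trace_map_pmat: "proj_trace \<tau> (map_pmat \<alpha> x) = proj_trace (\<lambda>a. \<tau> (\<alpha> a)) x"
  by (cases x) (simp add: proj_trace_def map_pmat_def)

lemma proj_trace_mvn_equiv:
  assumes \<tau>: "tracial_state \<tau>" and "mvn_equiv x y"
  shows "proj_trace \<tau> x = proj_trace \<tau> y"
proof -
  obtain n p m q where x: "x = (n, p)" and y: "y = (m, q)"
    by (cases x, cases y)
  with assms(2) obtain v where p: "p = mat_mul m (mat_adj v) v" and q: "q = mat_mul n v (mat_adj v)"
    by (auto simp: mvn_equiv_def)
  have "(\<Sum>i<n. \<tau> (p i i)) = (\<Sum>i<n. \<Sum>l<m. \<tau> (cs_star (v l i) * v l i))"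
    by (simp add: p mat_mul_def mat_adj_def tracial_state_sum[OF \<tau>])
  also have "\<dots> = (\<Sum>l<m. \<Sum>i<n. \<tau> (v l i * cs_star (v l i)))"
    by (subst sum.swap) (simp add: tracial_state_commute[OF \<tau>, of "cs_star _"])
  also have "\<dots> = (\<Sum>l<m. \<tau> (q l l))"
    by (simp add: q mat_mul_def mat_adj_def tracial_state_sum[OF \<tau>])
  finally show ?thesis
    unfolding x y proj_trace_def prod.case by (rule arg_cong)
qed

definition k0_trace :: "('a::unital_cstar_algebra \<Rightarrow> complex) \<Rightarrow> 'a pmat \<times> 'a pmat \<Rightarrow> real" where
  "k0_trace \<tau> z = proj_trace \<tau> (fst z) - proj_trace \<tau> (snd z)"

lemma k0_trace_k0_rel:
  assumes \<tau>: "tracial_state \<tau>" and "(z, z') \<in> k0_rel"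
  shows "k0_trace \<tau> z = k0_trace \<tau> z'"
proof -
  obtain x y x' y' where z: "z = (x, y)" and z': "z' = (x', y')"
    by (cases z, cases z')
  with assms(2) obtain k
    where "mvn_equiv (dsum (dsum x y') (unit_proj k)) (dsum (dsum x' y) (unit_proj k))"
    by (auto simp: k0_rel_def)
  from proj_trace_mvn_equiv[OF \<tau> this]
  show ?thesis
    by (simp add: z z' k0_trace_def proj_trace_dsum proj_trace_unit_proj[OF \<tau>])
qed

lemma rho_eq_k0_trace:
  assumes \<tau>: "tracial_state \<tau>" and X: "X \<in> K0 TYPE('a::unital_cstar_algebra)" and "z \<in> X"
  shows "rho X \<tau> = k0_trace \<tau> z"
proof -
  obtain u where u: "X = k0_rel `` {u}"
    using X unfolding K0_def by (auto elim!: quotientE)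
  have same: "k0_trace \<tau> w = k0_trace \<tau> z" if "w \<in> X" for w
    using k0_trace_k0_rel[OF \<tau>, of u] that \<open>z \<in> X\<close> unfolding u by (metis Image_singleton_iff)
  have "\<exists>x y. (x, y) \<in> X \<and> rho X \<tau> = proj_trace \<tau> x - proj_trace \<tau> y"
    unfolding rho_def by (rule someI_ex) (use \<open>z \<in> X\<close> in \<open>metis prod.exhaust\<close>)
  then show ?thesis
    using same by (auto simp: k0_trace_def)
qed

lemma rho_k0_map_fixed:
  assumes \<tau>: "tracial_state \<tau>" and \<tau>\<alpha>: "tracial_state (\<lambda>a. \<tau> (\<alpha> a))"
    and Y: "Y \<in> K0 TYPE('a::unital_cstar_algebra)" and fixed: "k0_map \<alpha> Y = Y"
  shows "rho Y \<tau> = rho Y (\<lambda>a. \<tau> (\<alpha> a))"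
proof (cases "Y = {}")
  case True
  txt \<open>Classes are never empty, but \<open>rho {}\<close> is a junk value independent of the trace anyway.\<close>
  then show ?thesis
    by (simp add: rho_def)
next
  case False
  then obtain z where z: "z \<in> Y"
    by blast
  then have "z \<in> k0_map \<alpha> Y"
    by (simp add: fixed)
  then obtain x y where xy: "(x, y) \<in> Y" and rel: "((map_pmat \<alpha> x, map_pmat \<alpha> y), z) \<in> k0_rel"
    unfolding k0_map_def k0_class_def by auto
  have "rho Y \<tau> = k0_trace \<tau> z"
    by (rule rho_eq_k0_trace[OF \<tau> Y z])
  also have "\<dots> = k0_trace \<tau> (map_pmat \<alpha> x, map_pmat \<alpha> y)"
    by (rule k0_trace_k0_rel[OF \<tau> rel, symmetric])
  also have "\<dots> = k0_trace (\<lambda>a. \<tau> (\<alpha> a)) (x, y)"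
    by (simp add: k0_trace_def proj_trace_map_pmat)
  also have "\<dots> = rho Y (\<lambda>a. \<tau> (\<alpha> a))"
    by (rule rho_eq_k0_trace[OF \<tau>\<alpha> Y xy, symmetric])
  finally show ?thesis .
qed

lemma rho_eq_if_eq_on_dense:
  assumes dense: "\<forall>X\<in>K0 TYPE('a). \<forall>\<epsilon>>0. \<exists>Y\<in>G. \<forall>\<tau>. tracial_state \<tau> \<longrightarrow> \<bar>rho X \<tau> - rho Y \<tau>\<bar> < \<epsilon>"
    and "tracial_state \<sigma>" "tracial_state \<tau>" and eq: "\<And>Y. Y \<in> G \<Longrightarrow> rho Y \<sigma> = rho Y \<tau>"
    and X: "X \<in> K0 TYPE('a::unital_cstar_algebra)"
  shows "rho X \<sigma> = rho X \<tau>"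
proof -
  have "\<bar>rho X \<sigma> - rho X \<tau>\<bar> \<le> \<epsilon>" if "\<epsilon> > 0" for \<epsilon>
  proof -
    obtain Y where "Y \<in> G" and close: "\<forall>\<tau>. tracial_state \<tau> \<longrightarrow> \<bar>rho X \<tau> - rho Y \<tau>\<bar> < \<epsilon> / 2"
      using dense X \<open>\<epsilon> > 0\<close> half_gt_zero by blast
    then have "\<bar>rho X \<sigma> - rho Y \<sigma>\<bar> < \<epsilon> / 2" "\<bar>rho X \<tau> - rho Y \<tau>\<bar> < \<epsilon> / 2"
      using assms(2,3) by blast+
    then show ?thesis
      using eq[OF \<open>Y \<in> G\<close>] by linarith
  qed
  then show ?thesis
    using dense_eq0_I[of "rho X \<sigma> - rho X \<tau>"] by simp
qed

definition singleton_pmat :: "'a::zero \<Rightarrow> 'a pmat" where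
  "singleton_pmat e = (1, \<lambda>i j. if i = 0 \<and> j = 0 then e else 0)"

definition proj_class :: "'a::unital_cstar_algebra \<Rightarrow> ('a pmat \<times> 'a pmat) set" where
  "proj_class e = k0_class (singleton_pmat e, (0, \<lambda>i j. 0))"

lemma is_proj_singleton_pmat:
  assumes "selfadjoint e" and "e * e = e"
  shows "is_proj (singleton_pmat e)"
  using assms by (auto simp: is_proj_def singleton_pmat_def mat_supp_def mat_adj_def mat_mul_def
      selfadjoint_def fun_eq_iff)

lemma mvn_equiv_refl:
  assumes "is_proj x"
  shows "mvn_equiv x x"
  using assms by (cases x) (auto simp: is_proj_def mvn_equiv_def)

lemma is_proj_zero_pmat: "is_proj (0, \<lambda>i j. 0)"
  by (simp add: is_proj_def mat_supp_def mat_adj_def mat_mul_def fun_eq_iff)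

lemma proj_class_in_K0:
  assumes "selfadjoint e" and "e * e = e"
  shows "proj_class e \<in> K0 TYPE('a::unital_cstar_algebra)"
  unfolding proj_class_def K0_def k0_class_def
  by (rule quotientI) (simp add: is_proj_singleton_pmat[OF assms] is_proj_zero_pmat)

lemma mem_proj_class:
  assumes "selfadjoint e" and "e * e = e"
  shows "(singleton_pmat e, (0, \<lambda>i j. 0)) \<in> proj_class e"
proof -
  have "dsum (dsum (singleton_pmat e) (0, \<lambda>i j. 0)) (unit_proj 0) = singleton_pmat e"
    by (auto simp: dsum_def singleton_pmat_def unit_proj_def fun_eq_iff)
  then show ?thesis
    using mvn_equiv_refl[OF is_proj_singleton_pmat[OF assms]] is_proj_singleton_pmat[OF assms]
      is_proj_zero_pmat
    unfolding proj_class_def k0_class_def k0_rel_def by (auto intro!: exI[of _ 0])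
qed

lemma rho_proj_class:
  assumes "tracial_state \<tau>" and "selfadjoint e" and "e * e = e"
  shows "rho (proj_class e) \<tau> = Re (\<tau> e)"
  using rho_eq_k0_trace[OF assms(1) proj_class_in_K0[OF assms(2,3)] mem_proj_class[OF assms(2,3)]]
  by (simp add: k0_trace_def proj_trace_def singleton_pmat_def)

theorem lemma4p1:
  fixes \<alpha> :: "'a::unital_cstar_algebra \<Rightarrow> 'a"
    and G :: "('a pmat \<times> 'a pmat) set set"
  assumes "separable_cstar TYPE('a)"
    and "simple_cstar TYPE('a)"
    and "real_rank_zero TYPE('a)"
    and "stable_rank_one TYPE('a)"
    and "star_automorphism \<alpha>"
    and "k0_subgroup G"
    and "\<forall>X\<in>K0 TYPE('a). \<forall>\<epsilon>>0. \<exists>Y\<in>G. \<forall>\<tau>. tracial_state \<tau> \<longrightarrow> \<bar>rho X \<tau> - rho Y \<tau>\<bar> < \<epsilon>"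
    and "\<forall>X\<in>G. k0_map \<alpha> X = X"
  shows "\<forall>\<tau>. tracial_state \<tau> \<longrightarrow> (\<forall>a. \<tau> (\<alpha> a) = \<tau> a)"
proof (intro allI impI)
  fix \<tau> :: "'a \<Rightarrow> complex" and a :: 'a
  assume \<tau>: "tracial_state \<tau>"
  have \<tau>\<alpha>: "tracial_state (\<lambda>a. \<tau> (\<alpha> a))"
    by (rule tracial_state_comp_star_automorphism[OF \<tau> assms(5)])
  have "G \<subseteq> K0 TYPE('a)"
    using assms(6) by (simp add: k0_subgroup_def)
  then have "rho Y (\<lambda>a. \<tau> (\<alpha> a)) = rho Y \<tau>" if "Y \<in> G" for Y
    using rho_k0_map_fixed[OF \<tau> \<tau>\<alpha>] assms(8) that by auto
  then have "rho X (\<lambda>a. \<tau> (\<alpha> a)) = rho X \<tau>" if "X \<in> K0 TYPE('a)" for X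
    by (rule rho_eq_if_eq_on_dense[OF assms(7) \<tau>\<alpha> \<tau> _ that])
  then have "Re (\<tau> (\<alpha> e)) = Re (\<tau> e)" if "selfadjoint e" "e * e = e" for e
    using rho_proj_class[OF \<tau>\<alpha> that] rho_proj_class[OF \<tau> that] proj_class_in_K0[OF that] by simp
  then show "\<tau> (\<alpha> a) = \<tau> a"
    by (rule tracial_states_eq_if_eq_on_projections[OF assms(3) \<tau>\<alpha> \<tau>])
qed

end
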